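(* Let $(N_1,m_1)$ and $(N_2,m_2)$ be labeled marked Petri nets and $E$ a system of linear constraints with $(N_1,m_1)\vartriangleright_E(N_2,m_2)$. Then for any label $a$ and any symbol $b$ (possibly the silent symbol $\tau$), $(N_1[a/b],m_1)\vartriangleright_E(N_2[a/b],m_2)$.
   Context: A Petri net $N=(P,T,\mathrm{Pre},\mathrm{Post})$ has a finite set of places $P$, a finite set of transitions $T$ disjoint from $P$, and flow functions $\mathrm{Pre},\mathrm{Post}:T\to(P\to\mathbb N)$. A marking is a map $m:P\to\mathbb N$. Transition $t$ is enabled at $m$ if $m(p)\ge\mathrm{Pre}(t,p)$ for all $p$; firing it yields $m'=m-\mathrm{Pre}(t)+\mathrm{Post}(t)$. A firing sequence $\varrho$ leads from $m$ to $m'$ ($m\overset{\varrho}{\Rightarrow}m'$) if its transitions can be fired successively from $m$ reaching $m'$. A labeled net has a labeling $l:T\to\Sigma\cup\{\tau\}$ ($\tau\notin\Sigma$ silent), extended to sequences by $l(\epsilon)=\epsilon$, $\tau$ mapped to $\epsilon$, $l(\varrho t)=l(\varrho)l(t)$. Formulas are Boolean combinations of linear (in)equalities over integer variables; place names are used as variables. For a marking $m$ over $P$, $\underline m\triangleq\bigwedge_{p\in P}(p=m(p))$; $m\models\phi$ means $\phi\wedge\underline m$ is satisfiable over the integers. Markings $m_1$ over $P_1$, $m_2$ over $P_2$ are compatible if they agree on $P_1\cap P_2$; then $m_1\uplus m_2$ is the marking on $P_1\cup P_2$ agreeing with both; $m_1\uplus m_2\models E$ presupposes compatibility. $E$-abstraction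 (for $N_1,N_2$ with labelings $l_1,l_2$ over the same alphabet): $(N_1,m_1)\sqsupseteq_E(N_2,m_2)$ iff (A1) $m_1\uplus m_2\models E$; and (A2) for every firing sequence $m_1\overset{\varrho_1}{\Rightarrow}m_1'$ in $N_1$ there is at least one marking $m_2'$ over $P_2$ with $m_1'\uplus m_2'\models E$, and for every marking $m_2'$ over $P_2$ with $m_1'\uplus m_2'\models E$ there is a firing sequence $\varrho_2$ of $N_2$ with $m_2\overset{\varrho_2}{\Rightarrow}m_2'$ and $l_1(\varrho_1)=l_2(\varrho_2)$. $(N_1,m_1)\vartriangleright_E(N_2,m_2)$ means both directions hold. Relabeling: if $N$ has labeling $l$ over $\Sigma$, $N[a/b]$ is the same net with labeling $l[a/b]$ over $(\Sigma\setminus\{a\})\cup\{b\}$, where $l[a/b](t)=b$ if $l(t)=a$ and $l[a/b](t)=l(t)$ otherwise. *)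

theory Defs
  imports Main
begin

datatype 'v linexp = Lin "('v \<times> int) list" int

fun lin_val :: "'v linexp \<Rightarrow> ('v \<Rightarrow> int) \<Rightarrow> int" where
  "lin_val (Lin cs c) v = (\<Sum>(x,k)\<leftarrow>cs. k * v x) + c"

datatype 'v formula =
    FTrue
  | Leq "'v linexp" "'v linexp"
  | Eq "'v linexp" "'v linexp"
  | Neg "'v formula"
  | Conj "'v formula" "'v formula"
  | Disj "'v formula" "'v formula"

fun holds :: "'v formula \<Rightarrow> ('v \<Rightarrow> int) \<Rightarrow> bool" where
  "holds FTrue v = True"
| "holds (Leq a b) v = (lin_val a v \<le> lin_val b v)"
| "holds (Eq a b) v = (lin_val a v = lin_val b v)"
| "holds (Neg f) v = (\<not> holds f v)"
| "holds (Conj f g) v = (holds f v \<and> holds g v)"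
| "holds (Disj f g) v = (holds f v \<or> holds g v)"

text \<open>Places of type 'p (place names double as variables of formulas),
  transitions of type 't, labels of type 'a; the label None is the silent tau.\<close>
record ('p, 't, 'a) lnet =
  places :: "'p set"
  trans :: "'t set"
  pre :: "'t \<Rightarrow> 'p \<Rightarrow> nat"
  post :: "'t \<Rightarrow> 'p \<Rightarrow> nat"
  lab :: "'t \<Rightarrow> 'a option"
  alph :: "'a set"

definition wf_net :: "('p, 't, 'a) lnet \<Rightarrow> bool" where
  "wf_net N \<longleftrightarrow> finite (places N) \<and> finite (trans N) \<and>
     (\<forall>t p. p \<notin> places N \<longrightarrow> pre N t p = 0 \<and> post N t p = 0) \<and>
     (\<forall>t\<in>trans N. \<forall>x. lab N t = Some x \<longrightarrow> x \<in> alph N)"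

definition marking_on :: "'p set \<Rightarrow> ('p \<Rightarrow> nat) \<Rightarrow> bool" where
  "marking_on P m \<longleftrightarrow> (\<forall>p. p \<notin> P \<longrightarrow> m p = 0)"

definition enabled :: "('p, 't, 'a) lnet \<Rightarrow> ('p \<Rightarrow> nat) \<Rightarrow> 't \<Rightarrow> bool" where
  "enabled N m t \<longleftrightarrow> t \<in> trans N \<and> (\<forall>p\<in>places N. pre N t p \<le> m p)"

definition fire :: "('p, 't, 'a) lnet \<Rightarrow> ('p \<Rightarrow> nat) \<Rightarrow> 't \<Rightarrow> ('p \<Rightarrow> nat)" where
  "fire N m t = (\<lambda>p. m p - pre N t p + post N t p)"

fun firing :: "('p, 't, 'a) lnet \<Rightarrow> ('p \<Rightarrow> nat) \<Rightarrow> 't list \<Rightarrow> ('p \<Rightarrow> nat) \<Rightarrow> bool" where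
  "firing N m [] m' \<longleftrightarrow> m' = m"
| "firing N m (t # \<rho>) m' \<longleftrightarrow> enabled N m t \<and> firing N (fire N m t) \<rho> m'"

definition word :: "('p, 't, 'a) lnet \<Rightarrow> 't list \<Rightarrow> 'a list" where
  "word N \<rho> = concat (map (\<lambda>t. case lab N t of None \<Rightarrow> [] | Some x \<Rightarrow> [x]) \<rho>)"

text \<open>m1 \<uplus> m2 \<Turnstile> E: E conjoined with the equations of both markings is satisfiable
  over the integers (this presupposes compatibility).\<close>
definition models2 :: "'p set \<Rightarrow> ('p \<Rightarrow> nat) \<Rightarrow> 'p set \<Rightarrow> ('p \<Rightarrow> nat) \<Rightarrow> 'p formula \<Rightarrow> bool" where
  "models2 P1 m1 P2 m2 E \<longleftrightarrow>
     (\<exists>v. (\<forall>p\<in>P1. v p = int (m1 p)) \<and> (\<forall>p\<in>P2. v p = int (m2 p)) \<and> holds E v)"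

definition abstracts ::
  "('p, 't1, 'a) lnet \<Rightarrow> ('p \<Rightarrow> nat) \<Rightarrow> 'p formula \<Rightarrow> ('p, 't2, 'a) lnet \<Rightarrow> ('p \<Rightarrow> nat) \<Rightarrow> bool" where
  "abstracts N1 m1 E N2 m2 \<longleftrightarrow>
     models2 (places N1) m1 (places N2) m2 E \<and>
     (\<forall>\<rho>1 m1'. firing N1 m1 \<rho>1 m1' \<longrightarrow>
        (\<exists>m2'. marking_on (places N2) m2' \<and> models2 (places N1) m1' (places N2) m2' E) \<and>
        (\<forall>m2'. marking_on (places N2) m2' \<and> models2 (places N1) m1' (places N2) m2' E \<longrightarrow>
           (\<exists>\<rho>2. firing N2 m2 \<rho>2 m2' \<and> word N1 \<rho>1 = word N2 \<rho>2)))"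

definition equiv_E ::
  "('p, 't1, 'a) lnet \<Rightarrow> ('p \<Rightarrow> nat) \<Rightarrow> 'p formula \<Rightarrow> ('p, 't2, 'a) lnet \<Rightarrow> ('p \<Rightarrow> nat) \<Rightarrow> bool" where
  "equiv_E N1 m1 E N2 m2 \<longleftrightarrow> abstracts N1 m1 E N2 m2 \<and> abstracts N2 m2 E N1 m1"

definition relabel :: "('p, 't, 'a) lnet \<Rightarrow> 'a \<Rightarrow> 'a option \<Rightarrow> ('p, 't, 'a) lnet" where
  "relabel N a b = N\<lparr> lab := (\<lambda>t. if lab N t = Some a then b else lab N t),
                      alph := (alph N - {a}) \<union> set_option b \<rparr>"

end

theory Submission
  imports Defs
begin

text \<open>Relabeling changes neither the places nor the firing behaviour of a net, and it acts on
  observed words by the letter-to-word substitution below. Hence the words of two firing sequences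
  that agree before relabeling still agree afterwards, and both clauses of the E-abstraction carry
  over verbatim.\<close>

definition relabel_word :: "'a \<Rightarrow> 'a option \<Rightarrow> 'a list \<Rightarrow> 'a list" where
  "relabel_word a b w = concat (map (\<lambda>x. if x = a then case b of None \<Rightarrow> [] | Some y \<Rightarrow> [y] else [x]) w)"

lemma places_relabel [simp]: "places (relabel N a b) = places N"
  by (simp add: relabel_def)

lemma enabled_relabel [simp]: "enabled (relabel N a b) = enabled N"
  by (simp add: relabel_def enabled_def fun_eq_iff)

lemma fire_relabel [simp]: "fire (relabel N a b) = fire N"
  by (simp add: relabel_def fire_def fun_eq_iff)

lemma firing_relabel [simp]: "firing (relabel N a b) m \<rho> m' \<longleftrightarrow> firing N m \<rho> m'"
  by (induction \<rho> arbitrary: m) auto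

lemma word_relabel: "word (relabel N a b) \<rho> = relabel_word a b (word N \<rho>)"
  by (induction \<rho>) (auto simp: word_def relabel_word_def relabel_def split: option.splits)

lemma abstracts_relabel:
  assumes "abstracts N1 m1 E N2 m2"
  shows "abstracts (relabel N1 a b) m1 E (relabel N2 a b) m2"
  using assms unfolding abstracts_def by (simp add: word_relabel) metis

theorem theorem3:
  fixes N1 :: "('p, 't1, 'a) lnet" and N2 :: "('p, 't2, 'a) lnet"
    and m1 m2 :: "'p \<Rightarrow> nat" and E :: "'p formula"
    and a :: 'a and b :: "'a option"
  assumes "wf_net N1" and "wf_net N2" and "alph N1 = alph N2"
    and "marking_on (places N1) m1" and "marking_on (places N2) m2"
    and "a \<in> alph N1"
    and "equiv_E N1 m1 E N2 m2"
  shows "equiv_E (relabel N1 a b) m1 E (relabel N2 a b) m2"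
  using assms(7) unfolding equiv_E_def by (simp add: abstracts_relabel)

end
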